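(* Let $n\ge 3$ and $m\ge 2$ be integers, let $S_n=K_{1,n}$ be the star with $n$ leaves and $P_m$ the path on $m$ vertices. Then $AT(S_n+_S P_m)=3$.
   Context: For an orientation $D$, a subdigraph is Eulerian if every vertex has equal in- and outdegree in it; $D$ is an AT-orientation if the numbers of Eulerian subgraphs with an even and with an odd number of arcs differ; $AT(G)$ is the smallest $k$ such that $G$ has an AT-orientation of maximum outdegree at most $k-1$. $S(G)$ is obtained from $G$ by subdividing each edge once, with vertex set identified with $V(G)\cup E(G)$. $G+_S H$ has vertex set $(V(G)\cup E(G))\times V(H)$, with $(u_1,u_2)\sim(v_1,v_2)$ iff [$u_1=v_1\in V(G)$ and $u_2v_2\in E(H)$] or [$u_2=v_2$ and $u_1v_1\in E(S(G))$]. *)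

theory Defs
  imports Main
begin

text \<open>A (simple, undirected) graph is a pair (V, E) of a vertex set and a set of
  2-element vertex subsets (edges).\<close>
type_synonym 'a graph = "'a set \<times> 'a set set"

definition orientation :: "'a graph \<Rightarrow> ('a \<times> 'a) set \<Rightarrow> bool" where
  "orientation G D \<longleftrightarrow>
     (\<forall>(u, v) \<in> D. {u, v} \<in> snd G) \<and>
     (\<forall>u v. {u, v} \<in> snd G \<longrightarrow> ((u, v) \<in> D \<longleftrightarrow> (v, u) \<notin> D))"

definition outdeg :: "('a \<times> 'a) set \<Rightarrow> 'a \<Rightarrow> nat" where
  "outdeg D v = card {w. (v, w) \<in> D}"

definition indeg :: "('a \<times> 'a) set \<Rightarrow> 'a \<Rightarrow> nat" where
  "indeg D v = card {w. (w, v) \<in> D}"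

definition eulerian :: "('a \<times> 'a) set \<Rightarrow> bool" where
  "eulerian H \<longleftrightarrow> (\<forall>v. indeg H v = outdeg H v)"

definition AT_orientation :: "('a \<times> 'a) set \<Rightarrow> bool" where
  "AT_orientation D \<longleftrightarrow>
     card {H. H \<subseteq> D \<and> eulerian H \<and> even (card H)}
       \<noteq> card {H. H \<subseteq> D \<and> eulerian H \<and> odd (card H)}"

definition AT :: "'a graph \<Rightarrow> nat" where
  "AT G = (LEAST k. \<exists>D. orientation G D \<and> AT_orientation D \<and>
                        (\<forall>v \<in> fst G. outdeg D v + 1 \<le> k))"

definition subdivision :: "'a graph \<Rightarrow> ('a + 'a set) graph" where
  "subdivision G = (Inl ` fst G \<union> Inr ` snd G,
                    {{Inl v, Inr e} | v e. e \<in> snd G \<and> v \<in> e})"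

definition sprod :: "'a graph \<Rightarrow> 'b graph \<Rightarrow> (('a + 'a set) \<times> 'b) graph" where
  "sprod G H = (fst (subdivision G) \<times> fst H,
     {{(Inl u, y), (Inl u, y')} | u y y'. u \<in> fst G \<and> {y, y'} \<in> snd H} \<union>
     {{(x, y), (x', y)} | x x' y. {x, x'} \<in> snd (subdivision G) \<and> y \<in> fst H})"

definition star :: "nat \<Rightarrow> nat graph" where
  "star n = ({0..n}, {{0, i} | i. i \<in> {1..n}})"

definition path :: "nat \<Rightarrow> nat graph" where
  "path m = ({0..<m}, {{i, Suc i} | i. Suc i < m})"

end

theory Submission
  imports Defs
begin

(* Upper bound: in S(G) +_S P_m orient every edge from a subdivision vertex towards the
   original vertex, and every fibre edge downwards along the path.  A height function
   strictly decreases along arcs, so the only Eulerian subdigraph is the empty one, and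
   each subdivision vertex has out-degree 2, every other vertex out-degree at most 1.
   Lower bound: if all out-degrees on a vertex set W were at most 1, the edges inside W
   would number at most |W|; but S(K_{1,2}) +_S P_2, contained in S_n +_S P_m for
   n, m >= 2, has 11 edges on 10 vertices. *)

definition simple_graph :: "'a graph \<Rightarrow> bool" where
  "simple_graph G \<longleftrightarrow> (\<forall>e \<in> snd G. e \<subseteq> fst G \<and> card e = 2)"

lemma simple_graph_edgeE:
  assumes "simple_graph G" "e \<in> snd G"
  obtains a b where "e = {a, b}" "a \<noteq> b" "a \<in> fst G" "b \<in> fst G"
  using assms unfolding simple_graph_def by (metis card_2_iff insert_subset)

lemma finite_edges:
  assumes "simple_graph G" "finite (fst G)"
  shows "finite (snd G)"
  using assms unfolding simple_graph_def by (meson PowI finite_Pow_iff finite_subset subsetI)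

lemma orientation_subset_vertices:
  assumes "simple_graph G" "orientation G D"
  shows "D \<subseteq> fst G \<times> fst G"
proof safe
  fix a b assume "(a, b) \<in> D"
  then have "{a, b} \<in> snd G" using assms(2) unfolding orientation_def by blast
  then show "a \<in> fst G" "b \<in> fst G" using assms(1) unfolding simple_graph_def by auto
qed

lemma finite_orientation:
  assumes "simple_graph G" "finite (fst G)" "orientation G D"
  shows "finite D"
  using orientation_subset_vertices[OF assms(1,3)] assms(2) by (simp add: finite_subset)

lemma eulerian_empty_if_descending:
  fixes \<phi> :: "'a \<Rightarrow> nat"
  assumes "finite H" "eulerian H" "\<And>p q. (p, q) \<in> H \<Longrightarrow> \<phi> q < \<phi> p"
  shows "H = {}"
proof (rule ccontr)
  assume "H \<noteq> {}"
  then obtain p q where pq: "(p, q) \<in> H" and least: "\<And>p' q'. (p', q') \<in> H \<Longrightarrow> \<phi> q \<le> \<phi> q'"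
    using ex_has_least_nat[of "\<lambda>(p, q). (p, q) \<in> H" _ "\<lambda>(p, q). \<phi> q"] by fastforce
  have "finite {w. (w, q) \<in> H}"
    using assms(1) by (rule finite_subset[rotated, OF finite_imageI]) force
  with pq have "indeg H q \<noteq> 0" unfolding indeg_def by auto
  then have "outdeg H q \<noteq> 0" using assms(2) unfolding eulerian_def by simp
  then obtain r where "(q, r) \<in> H" unfolding outdeg_def by fastforce
  with least assms(3) show False by (meson leD)
qed

lemma AT_orientation_if_descending:
  fixes \<phi> :: "'a \<Rightarrow> nat"
  assumes "finite D" "\<And>p q. (p, q) \<in> D \<Longrightarrow> \<phi> q < \<phi> p"
  shows "AT_orientation D"
proof -
  have empty: "H = {}" if "H \<subseteq> D" "eulerian H" for H
  proof (rule eulerian_empty_if_descending[of H \<phi>])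
    show "finite H" using that(1) assms(1) by (rule finite_subset)
  qed (use that assms(2) in blast)+
  have "eulerian {}" by (simp add: eulerian_def indeg_def outdeg_def)
  then have even: "{H. H \<subseteq> D \<and> eulerian H \<and> even (card H)} = {{}}"
    by (auto dest: empty)
  have odd: "{H. H \<subseteq> D \<and> eulerian H \<and> odd (card H)} = {}"
    by (auto dest: empty)
  show ?thesis unfolding AT_orientation_def even odd by simp
qed

lemma card_le_card_Union_if_outdeg_le_1:
  assumes "simple_graph G" "finite (fst G)" "orientation G D" "F \<subseteq> snd G"
    and outdeg: "\<forall>v \<in> \<Union>F. outdeg D v \<le> 1"
  shows "card F \<le> card (\<Union>F)"
proof -
  define out where "out v = {w. (v, w) \<in> D}" for v
  define D\<^sub>F where "D\<^sub>F = {(p, q) \<in> D. {p, q} \<in> F}"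
  have fin_D: "finite D" using finite_orientation assms(1-3) .
  then have fin_D\<^sub>F: "finite D\<^sub>F" unfolding D\<^sub>F_def by (rule rev_finite_subset) auto
  have fin_out: "finite (out v)" for v
    unfolding out_def using fin_D by (rule finite_subset[rotated, OF finite_imageI]) force
  have "\<Union>F \<subseteq> fst G" using assms(1,4) unfolding simple_graph_def by blast
  then have fin_V: "finite (\<Union>F)" using assms(2) by (rule finite_subset)
  have "F \<subseteq> (\<lambda>(p, q). {p, q}) ` D\<^sub>F"
  proof
    fix e assume "e \<in> F"
    then obtain a b where e: "e = {a, b}" "{a, b} \<in> snd G"
      using assms(1,4) by (metis simple_graph_edgeE subsetD)
    then have "(a, b) \<in> D \<or> (b, a) \<in> D" using assms(3) unfolding orientation_def by blast
    moreover have "e = {b, a}" using e by (simp add: insert_commute)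
    ultimately show "e \<in> (\<lambda>(p, q). {p, q}) ` D\<^sub>F"
      using \<open>e \<in> F\<close> e unfolding D\<^sub>F_def by force
  qed
  then have "card F \<le> card ((\<lambda>(p, q). {p, q}) ` D\<^sub>F)"
    using fin_D\<^sub>F by (intro card_mono) auto
  also have "\<dots> \<le> card D\<^sub>F" using fin_D\<^sub>F by (rule card_image_le)
  also have "\<dots> \<le> card (Sigma (\<Union>F) out)"
    using fin_V fin_out by (intro card_mono) (auto simp: D\<^sub>F_def out_def)
  also have "\<dots> = (\<Sum>v \<in> \<Union>F. card (out v))" using fin_V fin_out by simp
  also have "\<dots> \<le> (\<Sum>v \<in> \<Union>F. 1)"
    using outdeg unfolding outdeg_def out_def by (intro sum_mono) auto
  finally show ?thesis by simp
qed

lemma orientation_outdeg_ge_2_if_card_Union_less: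
  assumes "simple_graph G" "finite (fst G)" "orientation G D" "F \<subseteq> snd G"
    and "card (\<Union>F) < card F"
  shows "\<exists>v \<in> \<Union>F. 2 \<le> outdeg D v"
proof (rule ccontr)
  assume no_vertex: "\<not> ?thesis"
  have "outdeg D v \<le> 1" if "v \<in> \<Union>F" for v
  proof -
    from no_vertex that have "\<not> 2 \<le> outdeg D v" by blast
    then show ?thesis by simp
  qed
  then have "card F \<le> card (\<Union>F)"
    using assms(1-4) by (intro card_le_card_Union_if_outdeg_le_1) auto
  with assms(5) show False by simp
qed

lemma AT_eqI:
  assumes "orientation G D" "AT_orientation D" "\<forall>v \<in> fst G. outdeg D v + 1 \<le> k"
    and "\<And>D'. orientation G D' \<Longrightarrow> \<exists>v \<in> fst G. k \<le> outdeg D' v + 1"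
  shows "AT G = k"
  unfolding AT_def
proof (rule Least_equality)
  show "\<exists>D. orientation G D \<and> AT_orientation D \<and> (\<forall>v \<in> fst G. outdeg D v + 1 \<le> k)"
    using assms(1-3) by blast
next
  fix k' assume "\<exists>D'. orientation G D' \<and> AT_orientation D' \<and> (\<forall>v \<in> fst G. outdeg D' v + 1 \<le> k')"
  then show "k \<le> k'" using assms(4) by (meson order_trans)
qed

lemma fst_sprod: "fst (sprod G H) = (Inl ` fst G \<union> Inr ` snd G) \<times> fst H"
  by (simp add: sprod_def subdivision_def)

lemma sprod_edgeE:
  assumes "d \<in> snd (sprod G H)"
  obtains (fibre) u y y' where "d = {(Inl u, y), (Inl u, y')}" "u \<in> fst G" "{y, y'} \<in> snd H"
    | (layer) v e y where "d = {(Inl v, y), (Inr e, y)}" "e \<in> snd G" "v \<in> e" "y \<in> fst H"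
  using assms unfolding sprod_def subdivision_def by (auto simp: doubleton_eq_iff)

lemma sprod_fibre_edge:
  "u \<in> fst G \<Longrightarrow> {y, y'} \<in> snd H \<Longrightarrow> {(Inl u, y), (Inl u, y')} \<in> snd (sprod G H)"
  unfolding sprod_def by auto

lemma sprod_layer_edge:
  assumes "e \<in> snd G" "v \<in> e" "y \<in> fst H"
  shows "{(Inl v, y), (Inr e, y)} \<in> snd (sprod G H)"
proof -
  have "{Inl v, Inr e} \<in> snd (subdivision G)" using assms unfolding subdivision_def by auto
  then show ?thesis using assms(3) unfolding sprod_def by (simp only: snd_conv) blast
qed

lemma simple_graph_sprod:
  assumes "simple_graph G" "simple_graph H"
  shows "simple_graph (sprod G H)"
  unfolding simple_graph_def
proof
  fix d assume "d \<in> snd (sprod G H)"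
  then show "d \<subseteq> fst (sprod G H) \<and> card d = 2"
  proof (cases rule: sprod_edgeE)
    case (fibre u y y')
    then have "{y, y'} \<subseteq> fst H" "card {y, y'} = 2" using assms(2) unfolding simple_graph_def by auto
    then have "y \<noteq> y'" by auto
    with fibre \<open>{y, y'} \<subseteq> fst H\<close> show ?thesis by (auto simp: fst_sprod)
  next
    case (layer v e y)
    then have "v \<in> fst G" using assms(1) unfolding simple_graph_def by auto
    with layer show ?thesis by (auto simp: fst_sprod)
  qed
qed

lemma finite_fst_sprod:
  "simple_graph G \<Longrightarrow> finite (fst G) \<Longrightarrow> finite (fst H) \<Longrightarrow> finite (fst (sprod G H))"
  by (simp add: fst_sprod finite_edges)

lemma simple_graph_star: "simple_graph (star n)"
  unfolding simple_graph_def star_def by auto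

lemma simple_graph_path: "simple_graph (path m)"
  unfolding simple_graph_def path_def by auto

lemma star_edge: "1 \<le> i \<Longrightarrow> i \<le> n \<Longrightarrow> {0, i} \<in> snd (star n)"
  unfolding star_def by auto

lemma path_edge_iff: "{y, y'} \<in> snd (path m) \<longleftrightarrow> (y' = Suc y \<and> y' < m) \<or> (y = Suc y' \<and> y < m)"
  unfolding path_def by (auto simp: doubleton_eq_iff)

definition downward_orientation ::
    "'a graph \<Rightarrow> nat \<Rightarrow> ((('a + 'a set) \<times> nat) \<times> (('a + 'a set) \<times> nat)) set" where
  "downward_orientation G m =
     {((Inr e, y), (Inl v, y)) | e v y. e \<in> snd G \<and> v \<in> e \<and> y < m} \<union>
     {((Inl u, Suc y), (Inl u, y)) | u y. u \<in> fst G \<and> Suc y < m}"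

lemma downward_orientation_Inl_iff:
  "((Inl u, y), w) \<in> downward_orientation G m \<longleftrightarrow>
     u \<in> fst G \<and> 0 < y \<and> y < m \<and> w = (Inl u, y - 1)"
  unfolding downward_orientation_def by (cases y) auto

lemma downward_orientation_Inr_iff:
  "((Inr e, y), w) \<in> downward_orientation G m \<longleftrightarrow>
     e \<in> snd G \<and> y < m \<and> (\<exists>v \<in> e. w = (Inl v, y))"
  unfolding downward_orientation_def by auto

lemma orientation_downward_orientation:
  "orientation (sprod G (path m)) (downward_orientation G m)"
  unfolding orientation_def
proof (intro conjI allI impI)
  show "\<forall>(a, b) \<in> downward_orientation G m. {a, b} \<in> snd (sprod G (path m))"
  proof safe
    fix x y b assume arc: "((x, y), b) \<in> downward_orientation G m"
    show "{(x, y), b} \<in> snd (sprod G (path m))"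
    proof (cases x)
      case (Inl u)
      with arc have "u \<in> fst G" "{y, y - 1} \<in> snd (path m)" "b = (Inl u, y - 1)"
        by (auto simp: downward_orientation_Inl_iff path_edge_iff)
      with Inl show ?thesis by (simp add: sprod_fibre_edge)
    next
      case (Inr e)
      with arc obtain v where "e \<in> snd G" "v \<in> e" "y \<in> fst (path m)" "b = (Inl v, y)"
        by (auto simp: downward_orientation_Inr_iff path_def)
      with Inr show ?thesis by (simp add: sprod_layer_edge insert_commute)
    qed
  qed
next
  fix a b assume "{a, b} \<in> snd (sprod G (path m))"
  then show "(a, b) \<in> downward_orientation G m \<longleftrightarrow> (b, a) \<notin> downward_orientation G m"
  proof (cases rule: sprod_edgeE)
    case (fibre u y y')
    then show ?thesis
      by (auto simp: doubleton_eq_iff path_edge_iff downward_orientation_Inl_iff)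
  next
    case (layer v e y)
    then show ?thesis
      by (auto simp: doubleton_eq_iff path_def downward_orientation_Inl_iff downward_orientation_Inr_iff)
  qed
qed

lemma outdeg_downward_orientation_le_2:
  assumes "simple_graph G"
  shows "outdeg (downward_orientation G m) v \<le> 2"
proof -
  obtain x y where v: "v = (x, y)" by fastforce
  define out where "out = {w. (v, w) \<in> downward_orientation G m}"
  have "card out \<le> 2"
  proof (cases x)
    case (Inl u)
    then have "out \<subseteq> {(Inl u, y - 1)}"
      unfolding out_def v by (auto simp: downward_orientation_Inl_iff)
    then show ?thesis using card_mono[of "{(Inl u, y - 1)}" out] by simp
  next
    case (Inr e)
    show ?thesis
    proof (cases "e \<in> snd G")
      case True
      then have "card e = 2" using assms unfolding simple_graph_def by blast
      then have "finite e" by (simp add: card_ge_0_finite)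
      have "out \<subseteq> (\<lambda>v. (Inl v, y)) ` e"
        unfolding out_def v using Inr by (auto simp: downward_orientation_Inr_iff)
      then have "card out \<le> card ((\<lambda>v. (Inl v, y) :: ('a + 'a set) \<times> nat) ` e)"
        by (rule card_mono[rotated]) (simp add: \<open>finite e\<close>)
      also have "\<dots> \<le> card e" using \<open>finite e\<close> by (rule card_image_le)
      finally show ?thesis using \<open>card e = 2\<close> by simp
    next
      case False
      then have "out = {}" unfolding out_def v using Inr by (simp add: downward_orientation_Inr_iff)
      then show ?thesis by simp
    qed
  qed
  then show ?thesis unfolding outdeg_def out_def .
qed

lemma AT_orientation_downward_orientation:
  assumes "simple_graph G" "finite (fst G)"
  shows "AT_orientation (downward_orientation G m)"
proof (rule AT_orientation_if_descending)
  have "simple_graph (sprod G (path m))"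
    using assms(1) simple_graph_path by (rule simple_graph_sprod)
  moreover have "finite (fst (sprod G (path m)))"
    using assms by (intro finite_fst_sprod) (simp_all add: path_def)
  ultimately show "finite (downward_orientation G m)"
    using orientation_downward_orientation by (rule finite_orientation)
  define height :: "('a + 'a set) \<times> nat \<Rightarrow> nat"
    where "height p = (case p of (Inl _, y) \<Rightarrow> y | (Inr _, y) \<Rightarrow> Suc y)" for p
  fix p q assume "(p, q) \<in> downward_orientation G m"
  then show "height q < height p"
    unfolding height_def by (cases p; cases "fst p")
      (auto simp: downward_orientation_Inl_iff downward_orientation_Inr_iff)
qed

lemma sprod_star_path_has_outdeg_ge_2:
  assumes "2 \<le> n" "2 \<le> m" "orientation (sprod (star n) (path m)) D"
  shows "\<exists>v \<in> fst (sprod (star n) (path m)). 2 \<le> outdeg D v"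
proof -
  let ?G = "sprod (star n) (path m)"
  (* the subdivided path 1 - {0,1} - 0 - {0,2} - 2 in layers 0 and 1, joined by three rungs *)
  define layer :: "nat \<Rightarrow> ((nat + nat set) \<times> nat) set list" where
    "layer y = [{(Inl 1, y), (Inr {0, 1}, y)}, {(Inl 0, y), (Inr {0, 1}, y)},
                {(Inl 0, y), (Inr {0, 2}, y)}, {(Inl 2, y), (Inr {0, 2}, y)}]" for y
  define rungs :: "((nat + nat set) \<times> nat) set list" where
    "rungs = [{(Inl u, 0), (Inl u, 1)}. u \<leftarrow> [0, 1, 2]]"
  define F where "F = set (layer 0 @ layer 1 @ rungs)"
  define vertices :: "((nat + nat set) \<times> nat) list" where
    "vertices = [(x, y). y \<leftarrow> [0, 1], x \<leftarrow> [Inl 0, Inl 1, Inl 2, Inr {0, 1}, Inr {0, 2}]]"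
  have "card (\<Union>F) \<le> card (set vertices)"
    by (rule card_mono) (auto simp: F_def layer_def rungs_def vertices_def)
  also have "\<dots> \<le> length vertices" by (rule card_length)
  also have "\<dots> < card F"
    unfolding F_def layer_def rungs_def vertices_def by (simp add: doubleton_eq_iff)
  finally have "card (\<Union>F) < card F" .
  have star_edges: "{0, 1} \<in> snd (star n)" "{0, 2} \<in> snd (star n)"
    using assms(1) by (simp_all add: star_edge)
  have "set (layer y) \<subseteq> snd ?G" if "y < m" for y
    unfolding layer_def using that star_edges by (auto intro!: sprod_layer_edge simp: path_def)
  moreover have "set rungs \<subseteq> snd ?G"
    unfolding rungs_def using assms by (auto intro!: sprod_fibre_edge simp: star_def path_edge_iff)
  ultimately have "F \<subseteq> snd ?G" unfolding F_def using assms(2) by simp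
  have "simple_graph ?G" by (simp add: simple_graph_sprod simple_graph_star simple_graph_path)
  moreover have "finite (fst ?G)"
    by (intro finite_fst_sprod simple_graph_star) (simp_all add: star_def path_def)
  ultimately obtain v where "v \<in> \<Union>F" "2 \<le> outdeg D v"
    using orientation_outdeg_ge_2_if_card_Union_less assms(3) \<open>F \<subseteq> snd ?G\<close> \<open>card (\<Union>F) < card F\<close>
    by blast
  moreover have "\<Union>F \<subseteq> fst ?G"
    using \<open>simple_graph ?G\<close> \<open>F \<subseteq> snd ?G\<close> unfolding simple_graph_def by blast
  ultimately show ?thesis by blast
qed

theorem corollary3p5:
  fixes n m :: nat
  assumes "n \<ge> 3" and "m \<ge> 2"
  shows "AT (sprod (star n) (path m)) = 3"
proof (rule AT_eqI)
  have star: "simple_graph (star n)" "finite (fst (star n))"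
    by (rule simple_graph_star) (simp add: star_def)
  show "orientation (sprod (star n) (path m)) (downward_orientation (star n) m)"
    by (rule orientation_downward_orientation)
  show "AT_orientation (downward_orientation (star n) m)"
    using star by (rule AT_orientation_downward_orientation)
  show "\<forall>v \<in> fst (sprod (star n) (path m)). outdeg (downward_orientation (star n) m) v + 1 \<le> 3"
  proof
    fix v show "outdeg (downward_orientation (star n) m) v + 1 \<le> 3"
      using outdeg_downward_orientation_le_2[OF star(1), of m v] by linarith
  qed
next
  fix D assume "orientation (sprod (star n) (path m)) D"
  with assms show "\<exists>v \<in> fst (sprod (star n) (path m)). 3 \<le> outdeg D v + 1"
    using sprod_star_path_has_outdeg_ge_2[of n m D] by fastforce
qed

end
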